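(* Assume that $\mathcal{G}_{\log}\neq\emptyset$, that the set $\mathcal{X}\cap\Omega_{\log}$ is compact, and that the initial point $\mathbf{x}_0\in\mathcal{X}$ satisfies $g_\ell(\mathbf{x}_0)<0$ for all $\ell\in\mathcal{G}_{\log}$. Let $\{\mathbf{x}_k\}$, $\{\rho_k\}$, $\{\alpha_k\}$ be the sequences of iterates, penalty-barrier parameters and step-sizes generated by Algorithm LOG-DS. Then the index set $\mathcal{K}_\rho=\{k\in\mathbb{N}\mid \rho_{k+1}<\rho_k\}$ is infinite, $$\lim_{k\to+\infty}\rho_k=0,\qquad\text{and}\qquad \lim_{k\to+\infty,\ k\in\mathcal{K}_\rho}\alpha_k=0.$$
   Context: Problem (P): minimize $f(\mathbf{x})$ subject to $g_\ell(\mathbf{x})\le 0$ ($\ell=1,\dots,m$), $h_j(\mathbf{x})=0$ ($j=1,\dots,p$), $\mathbf{x}\in\mathcal{X}$, where $\mathcal{X}=\{\mathbf{x}\in\mathbb{R}^n\mid \mathbf{A}\mathbf{x}\le\mathbf{b}\}$ with $\mathbf{A}\in\mathbb{R}^{q\times n}$ (rows $\mathbf{a}_i^\top$), $\mathbf{b}\in\mathbb{R}^q$, and $f,g_\ell,h_j$ are real-valued and continuously differentiable on an open set containing $\mathcal{X}$. Given an initial point $\mathbf{x}_0$, set $\mathcal{G}_{\log}=\{\ell\in\{1,\dots,m\}\mid g_\ell(\mathbf{x}_0)<0\}$, $\mathcal{G}_{\rm ext}=\{\ell\in\{1,\dots,m\}\mid g_\ell(\mathbf{x}_0)\ge 0\}$,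 and $\Omega_{\log}=\{\mathbf{x}\in\mathbb{R}^n\mid g_\ell(\mathbf{x})\le 0,\ \ell\in\mathcal{G}_{\log}\}$. For $\rho>0$ and $\nu\in(1,2]$ the merit function is $$Z(\mathbf{x};\rho)=f(\mathbf{x})-\rho\sum_{\ell\in\mathcal{G}_{\log}}\log(-g_\ell(\mathbf{x}))+\frac{1}{\rho^{\nu-1}}\sum_{\ell\in\mathcal{G}_{\rm ext}}(\max\{g_\ell(\mathbf{x}),0\})^\nu+\frac{1}{\rho^{\nu-1}}\sum_{j=1}^p|h_j(\mathbf{x})|^\nu$$ if $\mathbf{x}\in\mathcal{X}$ and $g_\ell(\mathbf{x})<0$ for all $\ell\in\mathcal{G}_{\log}$, and $Z(\mathbf{x};\rho)=+\infty$ otherwise. A forcing function is a continuous nondecreasing $\xi:[0,+\infty)\to[0,+\infty)$ with $\xi(t)/t\to0$ as $t\downarrow0$ and such that $\xi(t_k)\to0$ implies $t_k\to0$. Algorithm LOG-DS. Data: $\mathbf{x}_0\in\mathcal{X}$ with $g_\ell(\mathbf{x}_0)<0$ for $\ell\in\mathcal{G}_{\log}$; a collection $\mathcal{D}$ of finite sets of unit vectors in $\mathbb{R}^n$; $\alpha_0>0$; $\rho_0>0$; $\nu\in(1,2]$; $\theta_\alpha,\theta_\rho\in(0,1)$; $\phi\ge1$; $\beta>1$; a forcing function $\xi$. At each iteration $k=0,1,2,\dots$: (Search, optional) if some $\mathbf{z}_k\in\mathcal{X}$ with $Z(\mathbf{z}_k;\rho_k)\le Z(\mathbf{x}_k;\rho_k)-\xi(\alpha_k)$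 is found, set $\mathbf{x}_{k+1}=\mathbf{z}_k$, $\alpha_{k+1}=\phi\alpha_k$, $\rho_{k+1}=\rho_k$ (successful iteration) and go to iteration $k+1$. Otherwise (Poll) select $\mathcal{D}_k\in\mathcal{D}$; if some $\mathbf{d}\in\mathcal{D}_k$ satisfies $\mathbf{x}_k+\alpha_k\mathbf{d}\in\mathcal{X}$ and $Z(\mathbf{x}_k+\alpha_k\mathbf{d};\rho_k)\le Z(\mathbf{x}_k;\rho_k)-\xi(\alpha_k)$, set $\mathbf{x}_{k+1}=\mathbf{x}_k+\alpha_k\mathbf{d}$, $\alpha_{k+1}=\phi\alpha_k$, $\rho_{k+1}=\rho_k$ (successful iteration). Otherwise the iteration is unsuccessful: set $\mathbf{x}_{k+1}=\mathbf{x}_k$, $\alpha_{k+1}=\theta_\alpha\alpha_k$, and (Penalty-barrier update) with $(g_{\min})_k=\min_{\ell\in\mathcal{G}_{\log}}|g_\ell(\mathbf{x}_k)|$, set $\rho_{k+1}=\theta_\rho\rho_k$ if $\alpha_{k+1}\le\min\{\rho_k^\beta,(g_{\min})_k^2\}$, and $\rho_{k+1}=\rho_k$ otherwise. *)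

theory Defs
  imports "HOL-Analysis.Analysis"
begin

definition C1_on :: "(real^'n) set \<Rightarrow> (real^'n \<Rightarrow> real) \<Rightarrow> bool" where
  "C1_on U f \<longleftrightarrow> (\<exists>G :: real^'n \<Rightarrow> real^'n.
      (\<forall>x\<in>U. (f has_derivative (\<lambda>v. G x \<bullet> v)) (at x)) \<and> continuous_on U G)"

definition polyX :: "nat \<Rightarrow> (nat \<Rightarrow> real^'n) \<Rightarrow> (nat \<Rightarrow> real) \<Rightarrow> (real^'n) set" where
  "polyX q a b = {x. \<forall>i\<in>{1..q}. a i \<bullet> x \<le> b i}"

definition Glog :: "nat \<Rightarrow> (nat \<Rightarrow> real^'n \<Rightarrow> real) \<Rightarrow> real^'n \<Rightarrow> nat set" where
  "Glog m g x0 = {l\<in>{1..m}. g l x0 < 0}"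

definition Gext :: "nat \<Rightarrow> (nat \<Rightarrow> real^'n \<Rightarrow> real) \<Rightarrow> real^'n \<Rightarrow> nat set" where
  "Gext m g x0 = {l\<in>{1..m}. g l x0 \<ge> 0}"

definition Omega_log :: "nat \<Rightarrow> (nat \<Rightarrow> real^'n \<Rightarrow> real) \<Rightarrow> real^'n \<Rightarrow> (real^'n) set" where
  "Omega_log m g x0 = {x. \<forall>l\<in>Glog m g x0. g l x \<le> 0}"

definition Zmerit ::
  "(real^'n \<Rightarrow> real) \<Rightarrow> nat \<Rightarrow> (nat \<Rightarrow> real^'n \<Rightarrow> real) \<Rightarrow> nat \<Rightarrow> (nat \<Rightarrow> real^'n \<Rightarrow> real)
   \<Rightarrow> (real^'n) set \<Rightarrow> real^'n \<Rightarrow> real \<Rightarrow> real \<Rightarrow> real^'n \<Rightarrow> ereal" where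
  "Zmerit f m g p h X x0 \<nu> \<rho> x =
    (if x \<in> X \<and> (\<forall>l\<in>Glog m g x0. g l x < 0) then
       ereal (f x - \<rho> * (\<Sum>l\<in>Glog m g x0. ln (- g l x))
              + 1 / \<rho> powr (\<nu> - 1) * (\<Sum>l\<in>Gext m g x0. (max (g l x) 0) powr \<nu>)
              + 1 / \<rho> powr (\<nu> - 1) * (\<Sum>j\<in>{1..p}. \<bar>h j x\<bar> powr \<nu>))
     else \<infinity>)"

definition forcing :: "(real \<Rightarrow> real) \<Rightarrow> bool" where
  "forcing \<xi> \<longleftrightarrow> continuous_on {0..} \<xi> \<and> mono_on {0..} \<xi> \<and> (\<forall>t\<ge>0. \<xi> t \<ge> 0)
     \<and> ((\<lambda>t. \<xi> t / t) \<longlongrightarrow> 0) (at_right 0)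
     \<and> (\<forall>t :: nat \<Rightarrow> real. (\<forall>k. t k \<ge> 0) \<longrightarrow> (\<lambda>k. \<xi> (t k)) \<longlonglongrightarrow> 0 \<longrightarrow> t \<longlonglongrightarrow> 0)"

text \<open>Z is the merit function as a function of rho and x; gmin is the function
  x |-> min over G_log of |g_l(x)|.  The search step is optional and
  nondeterministic; in the poll step any D_k in D may be selected and any
  successful direction may be accepted.\<close>
definition logds_iter ::
  "(real \<Rightarrow> real^'n \<Rightarrow> ereal) \<Rightarrow> (real^'n) set \<Rightarrow> (real^'n) set set \<Rightarrow> (real \<Rightarrow> real)
   \<Rightarrow> real \<Rightarrow> real \<Rightarrow> real \<Rightarrow> real \<Rightarrow> (real^'n \<Rightarrow> real)
   \<Rightarrow> real^'n \<Rightarrow> real \<Rightarrow> real \<Rightarrow> real^'n \<Rightarrow> real \<Rightarrow> real \<Rightarrow> bool" where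
  "logds_iter Z X D \<xi> \<phi> \<theta>\<alpha> \<theta>\<rho> \<beta> gmin xk \<alpha>k \<rho>k xk1 \<alpha>k1 \<rho>k1 \<longleftrightarrow>
     \<comment> \<open>successful search step\<close>
     (\<exists>z\<in>X. Z \<rho>k z \<le> Z \<rho>k xk - ereal (\<xi> \<alpha>k)
            \<and> xk1 = z \<and> \<alpha>k1 = \<phi> * \<alpha>k \<and> \<rho>k1 = \<rho>k)
   \<or> (\<exists>Dk\<in>D.
       \<comment> \<open>successful poll step\<close>
       (\<exists>d\<in>Dk. xk + \<alpha>k *\<^sub>R d \<in> X \<and> Z \<rho>k (xk + \<alpha>k *\<^sub>R d) \<le> Z \<rho>k xk - ereal (\<xi> \<alpha>k)
              \<and> xk1 = xk + \<alpha>k *\<^sub>R d \<and> \<alpha>k1 = \<phi> * \<alpha>k \<and> \<rho>k1 = \<rho>k)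
     \<or> \<comment> \<open>unsuccessful iteration\<close>
       ((\<forall>d\<in>Dk. \<not> (xk + \<alpha>k *\<^sub>R d \<in> X \<and> Z \<rho>k (xk + \<alpha>k *\<^sub>R d) \<le> Z \<rho>k xk - ereal (\<xi> \<alpha>k)))
        \<and> xk1 = xk \<and> \<alpha>k1 = \<theta>\<alpha> * \<alpha>k
        \<and> \<rho>k1 = (if \<alpha>k1 \<le> min (\<rho>k powr \<beta>) ((gmin xk)\<^sup>2) then \<theta>\<rho> * \<rho>k else \<rho>k)))"

end

theory Submission
  imports Defs
begin

text \<open>Suppose \<rho> were eventually constant, say equal to r. Then the merit values Z(x_k; r) are
  nonincreasing and, by compactness of the feasible region, bounded below; the log-barrier term
  forces the constraint values -g_l(x_k) of G_log away from 0 on this level set. Hence the threshold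
  min(r^\<beta>, g_min(x_k)^2) of the parameter update stays above a positive constant, so the step
  sizes stay bounded below, every successful iteration decreases the merit by a fixed amount, and
  only finitely many iterations succeed. Afterwards the step sizes shrink geometrically, which is
  a contradiction. So \<rho> decreases infinitely often, each time by the factor \<theta>\<rho>, whence
  \<rho> tends to 0; and at a decrease \<theta>\<alpha> \<alpha>_k \<le> \<rho>_k^\<beta>.\<close>

lemma forcing_nonneg: "forcing \<xi> \<Longrightarrow> 0 \<le> t \<Longrightarrow> 0 \<le> \<xi> t"
  unfolding forcing_def by blast

lemma forcing_mono:
  assumes "forcing \<xi>" and "0 \<le> s" and "s \<le> t"
  shows "\<xi> s \<le> \<xi> t"
proof -
  have "mono_on {0..} \<xi>"
    using assms(1) unfolding forcing_def by blast
  then show ?thesis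
    by (rule mono_onD) (use assms(2,3) in auto)
qed

lemma forcing_pos:
  assumes "forcing \<xi>" and "0 < t"
  shows "0 < \<xi> t"
proof (rule ccontr)
  assume "\<not> 0 < \<xi> t"
  then have "(\<lambda>k::nat. \<xi> t) \<longlonglongrightarrow> 0"
    using forcing_nonneg[OF assms(1), of t] assms(2) by simp
  moreover have "\<forall>t :: nat \<Rightarrow> real. (\<forall>k. t k \<ge> 0) \<longrightarrow> (\<lambda>k. \<xi> (t k)) \<longlonglongrightarrow> 0 \<longrightarrow> t \<longlonglongrightarrow> 0"
    using assms(1) unfolding forcing_def by blast
  then have "(\<forall>k::nat. 0 \<le> t) \<longrightarrow> (\<lambda>k::nat. \<xi> t) \<longlonglongrightarrow> 0 \<longrightarrow> (\<lambda>k::nat. t) \<longlonglongrightarrow> 0"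
    by (rule spec)
  ultimately have "(\<lambda>k::nat. t) \<longlonglongrightarrow> 0"
    using assms(2) by simp
  with assms(2) show False
    by (simp add: LIMSEQ_const_iff)
qed

lemma finite_large_decreases:
  fixes z :: "nat \<Rightarrow> real"
  assumes nonincr: "\<And>k. N \<le> k \<Longrightarrow> z (Suc k) \<le> z k"
    and bdd: "\<And>k. L \<le> z k" and "0 < s"
  shows "finite {k. z (Suc k) \<le> z k - s}"
proof -
  have "decseq (\<lambda>i. z (i + N))"
    by (rule decseq_SucI) (simp add: nonincr)
  then obtain l where "(\<lambda>i. z (i + N)) \<longlonglongrightarrow> l"
    using bdd decseq_convergent by blast
  then have "z \<longlonglongrightarrow> l"
    by (rule LIMSEQ_offset)
  then have "(\<lambda>k. z k - z (Suc k)) \<longlonglongrightarrow> 0"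
    using tendsto_diff[OF _ LIMSEQ_Suc] by fastforce
  then have "\<forall>\<^sub>F k in sequentially. z k - z (Suc k) < s"
    using \<open>0 < s\<close> by (rule order_tendstoD)
  then obtain K where K: "\<And>k. K \<le> k \<Longrightarrow> z k - z (Suc k) < s"
    by (auto simp: eventually_sequentially)
  have "{k. z (Suc k) \<le> z k - s} \<subseteq> {..<K}"
  proof
    fix k assume "k \<in> {k. z (Suc k) \<le> z k - s}"
    then show "k \<in> {..<K}"
      using K[of k] by (cases "K \<le> k") auto
  qed
  then show ?thesis
    using finite_subset by blast
qed

lemma eventually_geometric_tendsto_zero:
  fixes a :: "nat \<Rightarrow> real"
  assumes "\<And>k. N \<le> k \<Longrightarrow> a (Suc k) = \<theta> * a k" and "\<bar>\<theta>\<bar> < 1"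
  shows "a \<longlonglongrightarrow> 0"
proof -
  have "a (i + N) = \<theta> ^ i * a N" for i
  proof (induction i)
    case (Suc i)
    then show ?case
      using assms(1)[of "i + N"] by simp
  qed simp
  moreover have "(\<lambda>i. \<theta> ^ i * a N) \<longlonglongrightarrow> 0"
    using assms(2) by (intro tendsto_mult_left_zero LIMSEQ_power_zero) simp
  ultimately have "(\<lambda>i. a (i + N)) \<longlonglongrightarrow> 0"
    by simp
  then show ?thesis
    by (rule LIMSEQ_offset)
qed

text \<open>The parameter updates of LOG-DS along one run: Z r k is the merit value of the k-th iterate
  for the parameter r, and G k is g_min of the k-th iterate. An unsuccessful iteration keeps the
  iterate, hence leaves Z r k unchanged for every r.\<close>

locale penalty_barrier_run =
  fixes Z :: "real \<Rightarrow> nat \<Rightarrow> real" and G \<alpha> \<rho> :: "nat \<Rightarrow> real" and \<xi> :: "real \<Rightarrow> real"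
    and \<phi> \<theta>\<alpha> \<theta>\<rho> \<beta> :: real
  assumes step: "\<And>k. (\<rho> (Suc k) = \<rho> k \<and> \<alpha> (Suc k) = \<phi> * \<alpha> k \<and> Z (\<rho> k) (Suc k) \<le> Z (\<rho> k) k - \<xi> (\<alpha> k))
      \<or> ((\<forall>r. Z r (Suc k) = Z r k) \<and> \<alpha> (Suc k) = \<theta>\<alpha> * \<alpha> k
         \<and> \<rho> (Suc k) = (if \<alpha> (Suc k) \<le> min (\<rho> k powr \<beta>) ((G k)\<^sup>2) then \<theta>\<rho> * \<rho> k else \<rho> k))"
    and Z_bounded_below: "\<And>r. 0 < r \<Longrightarrow> \<exists>L. \<forall>k. L \<le> Z r k"
    and G_bounded_away_on_level_sets: "\<And>r M. 0 < r \<Longrightarrow> \<exists>\<delta>>0. \<forall>k. Z r k \<le> M \<longrightarrow> \<delta> \<le> G k"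
    and forcing: "forcing \<xi>"
    and \<alpha>0_pos: "0 < \<alpha> 0" and \<rho>0_pos: "0 < \<rho> 0"
    and \<theta>\<alpha>: "0 < \<theta>\<alpha>" "\<theta>\<alpha> < 1" and \<theta>\<rho>: "0 < \<theta>\<rho>" "\<theta>\<rho> < 1"
    and \<phi>: "1 \<le> \<phi>" and \<beta>: "1 < \<beta>"
begin

definition successful :: "nat \<Rightarrow> bool" where
  "successful k \<longleftrightarrow> \<rho> (Suc k) = \<rho> k \<and> \<alpha> (Suc k) = \<phi> * \<alpha> k \<and> Z (\<rho> k) (Suc k) \<le> Z (\<rho> k) k - \<xi> (\<alpha> k)"

lemma unsuccessful_step:
  assumes "\<not> successful k"
  shows "Z r (Suc k) = Z r k" and "\<alpha> (Suc k) = \<theta>\<alpha> * \<alpha> k"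
    and "\<rho> (Suc k) = (if \<alpha> (Suc k) \<le> min (\<rho> k powr \<beta>) ((G k)\<^sup>2) then \<theta>\<rho> * \<rho> k else \<rho> k)"
  using step[of k] assms unfolding successful_def by auto

lemma alpha_pos: "0 < \<alpha> k"
proof (induction k)
  case (Suc k)
  then show ?case
    using step[of k] \<phi> \<theta>\<alpha> by auto
qed (rule \<alpha>0_pos)

lemma rho_pos: "0 < \<rho> k"
proof (induction k)
  case (Suc k)
  then show ?case
    using step[of k] \<theta>\<rho> by auto
qed (rule \<rho>0_pos)

lemma rho_Suc_le: "\<rho> (Suc k) \<le> \<rho> k"
  using step[of k] \<theta>\<rho> rho_pos[of k] by (auto simp: mult_le_cancel_right1)

lemma decseq_rho: "decseq \<rho>"
  using rho_Suc_le by (rule decseq_SucI)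

lemma rho_decrease:
  assumes "\<rho> (Suc k) < \<rho> k"
  shows "\<rho> (Suc k) = \<theta>\<rho> * \<rho> k" and "\<theta>\<alpha> * \<alpha> k \<le> \<rho> k powr \<beta>"
proof -
  have "\<not> successful k"
    using assms unfolding successful_def by auto
  then show "\<rho> (Suc k) = \<theta>\<rho> * \<rho> k" and "\<theta>\<alpha> * \<alpha> k \<le> \<rho> k powr \<beta>"
    using unsuccessful_step[of k] assms by (auto split: if_splits)
qed

lemma Z_Suc_le: "Z (\<rho> k) (Suc k) \<le> Z (\<rho> k) k"
  using step[of k] forcing_nonneg[OF forcing, of "\<alpha> k"] alpha_pos[of k] by auto

lemma alpha_bounded_below_if_rho_constant:
  assumes const: "\<And>k. N \<le> k \<Longrightarrow> \<rho> k = \<rho> N"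
  obtains c where "0 < c" and "\<And>k. N \<le> k \<Longrightarrow> c \<le> \<alpha> k"
proof -
  define r where "r = \<rho> N"
  have "0 < r"
    unfolding r_def by (rule rho_pos)
  have "Z r k \<le> Z r N" if "N \<le> k" for k
    using that
  proof (induction k rule: dec_induct)
    case (step n)
    then show ?case
      using Z_Suc_le[of n] const[of n] unfolding r_def by simp
  qed simp
  moreover obtain \<delta> where "0 < \<delta>" and "\<forall>k. Z r k \<le> Z r N \<longrightarrow> \<delta> \<le> G k"
    using G_bounded_away_on_level_sets[OF \<open>0 < r\<close>] by blast
  ultimately have G_ge: "\<delta>\<^sup>2 \<le> (G k)\<^sup>2" if "N \<le> k" for k
    using that \<open>0 < \<delta>\<close> by (simp add: power_mono)
  define c where "c = min (\<alpha> N) (min (r powr \<beta>) (\<delta>\<^sup>2))"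
  have "c \<le> \<alpha> k" if "N \<le> k" for k
    using that
  proof (induction k rule: dec_induct)
    case base
    then show ?case
      unfolding c_def by simp
  next
    case (step n)
    show ?case
    proof (cases "successful n")
      case True
      then have "\<alpha> n \<le> \<alpha> (Suc n)"
        using \<phi> alpha_pos[of n] unfolding successful_def by (simp add: mult_le_cancel_right1)
      with step.IH show ?thesis
        by simp
    next
      case False
      have "\<rho> (Suc n) = r" and "\<rho> n = r"
        using const[of n] const[of "Suc n"] step.hyps unfolding r_def by auto
      then have "\<not> \<alpha> (Suc n) \<le> min (r powr \<beta>) ((G n)\<^sup>2)"
        using unsuccessful_step(3)[OF False] \<theta>\<rho> \<open>0 < r\<close> by (auto split: if_splits)
      with G_ge[OF step.hyps(1)] show ?thesis
        unfolding c_def by auto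
    qed
  qed
  moreover have "0 < c"
    unfolding c_def using alpha_pos \<open>0 < r\<close> \<open>0 < \<delta>\<close> by simp
  ultimately show thesis
    using that by blast
qed

lemma finite_successes_if_rho_constant:
  assumes const: "\<And>k. N \<le> k \<Longrightarrow> \<rho> k = \<rho> N"
  shows "finite {k. N \<le> k \<and> successful k}"
proof -
  define r where "r = \<rho> N"
  obtain c where "0 < c" and c: "\<And>k. N \<le> k \<Longrightarrow> c \<le> \<alpha> k"
    using alpha_bounded_below_if_rho_constant[OF const] by blast
  have "{k. N \<le> k \<and> successful k} \<subseteq> {k. Z r (Suc k) \<le> Z r k - \<xi> c}"
  proof safe
    fix k assume "N \<le> k" and "successful k"
    moreover have "\<xi> c \<le> \<xi> (\<alpha> k)"
      using forcing_mono[OF forcing _ c] \<open>0 < c\<close> \<open>N \<le> k\<close> by simp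
    ultimately show "Z r (Suc k) \<le> Z r k - \<xi> c"
      using const[of k] unfolding successful_def r_def by simp
  qed
  moreover obtain L where L: "\<And>k. L \<le> Z r k"
    using Z_bounded_below rho_pos unfolding r_def by blast
  have "finite {k. Z r (Suc k) \<le> Z r k - \<xi> c}"
  proof (rule finite_large_decreases)
    show "Z r (Suc k) \<le> Z r k" if "N \<le> k" for k
      using Z_Suc_le[of k] const[OF that] unfolding r_def by simp
    show "L \<le> Z r k" for k
      by (rule L)
    show "0 < \<xi> c"
      using forcing_pos[OF forcing \<open>0 < c\<close>] .
  qed
  ultimately show ?thesis
    by (rule finite_subset)
qed

lemma infinite_rho_decreases: "infinite {k. \<rho> (Suc k) < \<rho> k}"
proof
  assume "finite {k. \<rho> (Suc k) < \<rho> k}"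
  then obtain N where N: "\<And>k. \<rho> (Suc k) < \<rho> k \<Longrightarrow> k < N"
    unfolding finite_nat_set_iff_bounded by auto
  have const: "\<rho> k = \<rho> N" if "N \<le> k" for k
    using that
  proof (induction k rule: dec_induct)
    case (step n)
    then show ?case
      using rho_Suc_le[of n] N[of n] by fastforce
  qed simp
  obtain c where "0 < c" and c: "\<And>k. N \<le> k \<Longrightarrow> c \<le> \<alpha> k"
    using alpha_bounded_below_if_rho_constant[OF const] by blast
  obtain N' where N': "\<And>k. N \<le> k \<Longrightarrow> successful k \<Longrightarrow> k < N'"
    using finite_successes_if_rho_constant[OF const]
    unfolding finite_nat_set_iff_bounded by auto
  have "\<alpha> (Suc k) = \<theta>\<alpha> * \<alpha> k" if "max N N' \<le> k" for k
    using unsuccessful_step(2) N'[of k] that by fastforce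
  then have "\<alpha> \<longlonglongrightarrow> 0"
    using \<theta>\<alpha> by (intro eventually_geometric_tendsto_zero[of "max N N'"]) auto
  then have "c \<le> 0"
    using c by (intro LIMSEQ_le_const) auto
  with \<open>0 < c\<close> show False
    by simp
qed

lemma rho_tendsto_zero: "\<rho> \<longlonglongrightarrow> 0"
proof -
  obtain L where "\<rho> \<longlonglongrightarrow> L" and L: "\<forall>k. L \<le> \<rho> k"
    using decseq_convergent[OF decseq_rho] rho_pos less_imp_le by blast
  have "\<exists>k. \<rho> k \<le> \<theta>\<rho> ^ n * \<rho> 0" for n
  proof (induction n)
    case (Suc n)
    then obtain k where k: "\<rho> k \<le> \<theta>\<rho> ^ n * \<rho> 0"
      by blast
    obtain j where "k \<le> j" and "\<rho> (Suc j) < \<rho> j"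
      using infinite_rho_decreases unfolding infinite_nat_iff_unbounded_le by blast
    then have "\<rho> (Suc j) = \<theta>\<rho> * \<rho> j" and "\<rho> j \<le> \<rho> k"
      using rho_decrease(1) decseqD[OF decseq_rho] by auto
    then have "\<rho> (Suc j) \<le> \<theta>\<rho> ^ Suc n * \<rho> 0"
      using k \<theta>\<rho> by (simp add: mult_left_mono order_trans)
    then show ?case
      by blast
  qed auto
  then have "L \<le> \<theta>\<rho> ^ n * \<rho> 0" for n
    using L order_trans by blast
  moreover have "(\<lambda>n. \<theta>\<rho> ^ n * \<rho> 0) \<longlonglongrightarrow> 0"
    using \<theta>\<rho> by (intro tendsto_mult_left_zero LIMSEQ_power_zero) simp
  ultimately have "L \<le> 0"
    using LIMSEQ_le_const[of "\<lambda>n. \<theta>\<rho> ^ n * \<rho> 0" 0 L] by blast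
  moreover have "0 \<le> L"
    using \<open>\<rho> \<longlonglongrightarrow> L\<close> rho_pos by (intro LIMSEQ_le_const) (auto intro: less_imp_le)
  ultimately show ?thesis
    using \<open>\<rho> \<longlonglongrightarrow> L\<close> by simp
qed

lemma alpha_tendsto_zero_on_rho_decreases:
  "\<forall>\<epsilon>>0. \<exists>N. \<forall>k\<in>{k. \<rho> (Suc k) < \<rho> k}. k \<ge> N \<longrightarrow> \<bar>\<alpha> k\<bar> < \<epsilon>"
proof (intro allI impI)
  fix \<epsilon> :: real assume "0 < \<epsilon>"
  have "(\<lambda>k. \<rho> k powr \<beta> / \<theta>\<alpha>) \<longlonglongrightarrow> 0"
    using rho_tendsto_zero \<beta> rho_pos
    by (intro tendsto_divide_zero tendsto_zero_powrI) (auto simp: less_imp_le)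
  then obtain N where N: "\<forall>k\<ge>N. norm (\<rho> k powr \<beta> / \<theta>\<alpha> - 0) < \<epsilon>"
    using LIMSEQ_D \<open>0 < \<epsilon>\<close> by blast
  have "\<bar>\<alpha> k\<bar> < \<epsilon>" if "\<rho> (Suc k) < \<rho> k" and "N \<le> k" for k
  proof -
    have "\<alpha> k \<le> \<rho> k powr \<beta> / \<theta>\<alpha>"
      using rho_decrease(2)[OF that(1)] \<theta>\<alpha> by (simp add: pos_le_divide_eq mult.commute)
    moreover have "\<rho> k powr \<beta> / \<theta>\<alpha> < \<epsilon>"
      using N that(2) \<theta>\<alpha> by simp
    ultimately show ?thesis
      using alpha_pos[of k] by simp
  qed
  then show "\<exists>N. \<forall>k\<in>{k. \<rho> (Suc k) < \<rho> k}. k \<ge> N \<longrightarrow> \<bar>\<alpha> k\<bar> < \<epsilon>"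
    by blast
qed

end

lemma C1_on_continuous_on:
  assumes "C1_on U f" and "S \<subseteq> U"
  shows "continuous_on S f"
proof -
  obtain G where "\<forall>x\<in>U. (f has_derivative (\<lambda>v. G x \<bullet> v)) (at x)"
    using assms(1) unfolding C1_on_def by blast
  then have "\<forall>x\<in>S. isCont f x"
    using assms(2) has_derivative_continuous by blast
  then show ?thesis
    by (rule continuous_at_imp_continuous_on)
qed

definition log_barrier :: "('a \<Rightarrow> real) \<Rightarrow> (nat \<Rightarrow> 'a \<Rightarrow> real) \<Rightarrow> nat set \<Rightarrow> real \<Rightarrow> 'a \<Rightarrow> real" where
  "log_barrier f g L r x = f x - r * (\<Sum>l\<in>L. ln (- g l x))"

definition penalty ::
  "nat \<Rightarrow> (nat \<Rightarrow> real^'n \<Rightarrow> real) \<Rightarrow> nat \<Rightarrow> (nat \<Rightarrow> real^'n \<Rightarrow> real) \<Rightarrow> real^'n \<Rightarrow> real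
   \<Rightarrow> real \<Rightarrow> real^'n \<Rightarrow> real" where
  "penalty m g p h x0 \<nu> r x =
     1 / r powr (\<nu> - 1) * (\<Sum>l\<in>Gext m g x0. (max (g l x) 0) powr \<nu>)
     + 1 / r powr (\<nu> - 1) * (\<Sum>j\<in>{1..p}. \<bar>h j x\<bar> powr \<nu>)"

lemma penalty_nonneg: "0 \<le> penalty m g p h x0 \<nu> r x"
  unfolding penalty_def by (intro add_nonneg_nonneg mult_nonneg_nonneg sum_nonneg) auto

lemma Zmerit_eq:
  "Zmerit f m g p h X x0 \<nu> r x =
     (if x \<in> X \<and> (\<forall>l\<in>Glog m g x0. g l x < 0)
      then ereal (log_barrier f g (Glog m g x0) r x + penalty m g p h x0 \<nu> r x) else \<infinity>)"
  unfolding Zmerit_def log_barrier_def penalty_def by (simp add: algebra_simps)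

lemma sum_ln_le_ln_member:
  assumes "finite A" and "i \<in> A" and pos: "\<And>l. l \<in> A \<Longrightarrow> 0 < u l" and le: "\<And>l. l \<in> A \<Longrightarrow> u l \<le> B"
  shows "(\<Sum>l\<in>A. ln (u l)) \<le> ln (u i) + real (card A - 1) * ln B"
proof -
  have "(\<Sum>l\<in>A. ln (u l)) = ln (u i) + (\<Sum>l\<in>A - {i}. ln (u l))"
    using assms(1,2) by (simp add: sum.remove)
  also have "(\<Sum>l\<in>A - {i}. ln (u l)) \<le> real (card (A - {i})) * ln B"
    using pos le by (intro sum_bounded_above ln_mono) auto
  finally show ?thesis
    using assms(1,2) by simp
qed

lemma compact_bound_finite_family:
  fixes g :: "nat \<Rightarrow> 'a::topological_space \<Rightarrow> real"
  assumes "compact K" and "finite L" and "\<And>l. l \<in> L \<Longrightarrow> continuous_on K (g l)"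
  obtains B where "0 < B" and "\<And>x l. x \<in> K \<Longrightarrow> l \<in> L \<Longrightarrow> \<bar>g l x\<bar> \<le> B"
proof -
  have "continuous_on K (\<lambda>x. \<Sum>l\<in>L. \<bar>g l x\<bar>)"
    using assms(3) by (intro continuous_intros) auto
  then obtain B where "0 \<le> B" and B: "\<And>x. x \<in> K \<Longrightarrow> norm (\<Sum>l\<in>L. \<bar>g l x\<bar>) \<le> B"
    using continuous_on_compact_bound[OF assms(1)] by blast
  have "\<bar>g l x\<bar> \<le> B + 1" if "x \<in> K" and "l \<in> L" for x l
  proof -
    have "\<bar>g l x\<bar> \<le> (\<Sum>l\<in>L. \<bar>g l x\<bar>)"
      using assms(2) that(2) by (intro member_le_sum) auto
    then show ?thesis
      using B[OF that(1)] by simp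
  qed
  moreover have "0 < B + 1"
    using \<open>0 \<le> B\<close> by simp
  ultimately show thesis
    using that by blast
qed

lemma log_barrier_bounded_below:
  assumes "compact K" and "continuous_on K f" and "finite L"
    and "\<And>l. l \<in> L \<Longrightarrow> continuous_on K (g l)" and "0 \<le> r"
  obtains B where "\<And>x. x \<in> K \<Longrightarrow> \<forall>l\<in>L. g l x < 0 \<Longrightarrow> B \<le> log_barrier f g L r x"
proof -
  obtain Bf where Bf: "\<And>x. x \<in> K \<Longrightarrow> norm (f x) \<le> Bf"
    using continuous_on_compact_bound[OF assms(1,2)] by blast
  obtain Bg where Bg: "\<And>x l. x \<in> K \<Longrightarrow> l \<in> L \<Longrightarrow> \<bar>g l x\<bar> \<le> Bg"
    using compact_bound_finite_family[where g = g, OF assms(1,3,4)] by blast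
  have "- Bf - r * (real (card L) * ln Bg) \<le> log_barrier f g L r x"
    if "x \<in> K" and neg: "\<forall>l\<in>L. g l x < 0" for x
  proof -
    have "(\<Sum>l\<in>L. ln (- g l x)) \<le> real (card L) * ln Bg"
      using neg Bg[OF that(1)] by (intro sum_bounded_above) fastforce
    then have "r * (\<Sum>l\<in>L. ln (- g l x)) \<le> r * (real (card L) * ln Bg)"
      using assms(5) by (rule mult_left_mono)
    then show ?thesis
      using Bf[OF that(1)] unfolding log_barrier_def by simp
  qed
  then show thesis
    using that by blast
qed

lemma log_barrier_level_sets_separated:
  assumes "compact K" and "continuous_on K f" and "finite L" and "L \<noteq> {}"
    and "\<And>l. l \<in> L \<Longrightarrow> continuous_on K (g l)" and "0 < r"
  obtains \<delta> where "0 < \<delta>"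
    and "\<And>x. x \<in> K \<Longrightarrow> \<forall>l\<in>L. g l x < 0 \<Longrightarrow> log_barrier f g L r x \<le> M
           \<Longrightarrow> \<delta> \<le> Min ((\<lambda>l. \<bar>g l x\<bar>) ` L)"
proof -
  obtain Bf where Bf: "\<And>x. x \<in> K \<Longrightarrow> norm (f x) \<le> Bf"
    using continuous_on_compact_bound[OF assms(1,2)] by blast
  obtain Bg where Bg: "\<And>x l. x \<in> K \<Longrightarrow> l \<in> L \<Longrightarrow> \<bar>g l x\<bar> \<le> Bg"
    using compact_bound_finite_family[where g = g, OF assms(1,3,5)] by blast
  define \<delta> where "\<delta> = exp ((- Bf - M) / r - real (card L - 1) * ln Bg)"
  have "\<delta> \<le> \<bar>g i x\<bar>"
    if "x \<in> K" and neg: "\<forall>l\<in>L. g l x < 0" and "log_barrier f g L r x \<le> M" and "i \<in> L" for x i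
  proof -
    have "- Bf - M \<le> r * (\<Sum>l\<in>L. ln (- g l x))"
      using Bf[OF that(1)] that(3) unfolding log_barrier_def by simp
    also have "\<dots> \<le> r * (ln (- g i x) + real (card L - 1) * ln Bg)"
      using neg Bg[OF that(1)] assms(3,6) that(4)
      by (intro mult_left_mono sum_ln_le_ln_member) fastforce+
    finally have "(- Bf - M) / r - real (card L - 1) * ln Bg \<le> ln (- g i x)"
      using assms(6) by (simp add: divide_le_eq algebra_simps)
    then show ?thesis
      unfolding \<delta>_def using neg that(4) by (simp add: ln_ge_iff abs_of_neg)
  qed
  then have "\<delta> \<le> Min ((\<lambda>l. \<bar>g l x\<bar>) ` L)"
    if "x \<in> K" and "\<forall>l\<in>L. g l x < 0" and "log_barrier f g L r x \<le> M" for x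
    using that assms(3,4) by (simp add: Min_ge_iff)
  moreover have "0 < \<delta>"
    unfolding \<delta>_def by simp
  ultimately show thesis
    using that by blast
qed

lemma logds_iter_feasible_step:
  fixes \<Phi> :: "real \<Rightarrow> real^'n \<Rightarrow> real"
  assumes iter: "logds_iter Z X D \<xi> \<phi> \<theta>\<alpha> \<theta>\<rho> \<beta> gmin xk \<alpha>k \<rho>k xk1 \<alpha>k1 \<rho>k1"
    and Z: "\<And>r y. Z r y = (if y \<in> F then ereal (\<Phi> r y) else \<infinity>)"
    and "xk \<in> F"
  shows "xk1 \<in> F \<and>
    ((\<rho>k1 = \<rho>k \<and> \<alpha>k1 = \<phi> * \<alpha>k \<and> \<Phi> \<rho>k xk1 \<le> \<Phi> \<rho>k xk - \<xi> \<alpha>k)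
     \<or> (xk1 = xk \<and> \<alpha>k1 = \<theta>\<alpha> * \<alpha>k
        \<and> \<rho>k1 = (if \<alpha>k1 \<le> min (\<rho>k powr \<beta>) ((gmin xk)\<^sup>2) then \<theta>\<rho> * \<rho>k else \<rho>k)))"
proof -
  have sufficient_decrease: "y \<in> F \<and> \<Phi> r y \<le> \<Phi> r xk - w" if "Z r y \<le> Z r xk - ereal w" for r y w
    using that \<open>xk \<in> F\<close> by (cases "y \<in> F") (simp_all add: Z)
  from iter show ?thesis
    unfolding logds_iter_def
  proof (elim disjE bexE conjE)
    fix z assume "Z \<rho>k z \<le> Z \<rho>k xk - ereal (\<xi> \<alpha>k)" "xk1 = z" "\<alpha>k1 = \<phi> * \<alpha>k" "\<rho>k1 = \<rho>k"
    then show ?thesis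
      using sufficient_decrease by blast
  next
    fix Dk d assume "Z \<rho>k (xk + \<alpha>k *\<^sub>R d) \<le> Z \<rho>k xk - ereal (\<xi> \<alpha>k)"
      and "xk1 = xk + \<alpha>k *\<^sub>R d" "\<alpha>k1 = \<phi> * \<alpha>k" "\<rho>k1 = \<rho>k"
    then show ?thesis
      using sufficient_decrease by blast
  qed (use \<open>xk \<in> F\<close> in simp)
qed

lemma logds_run_penalty_barrier_run:
  fixes f :: "real^'n \<Rightarrow> real" and g :: "nat \<Rightarrow> real^'n \<Rightarrow> real" and x :: "nat \<Rightarrow> real^'n"
    and L :: "nat set" and P :: "real \<Rightarrow> real^'n \<Rightarrow> real"
  defines "\<Phi> \<equiv> \<lambda>r y. log_barrier f g L r y + P r y"
    and "gmin \<equiv> \<lambda>y. Min ((\<lambda>l. \<bar>g l y\<bar>) ` L)"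
  assumes run: "\<And>k. logds_iter Z X D \<xi> \<phi> \<theta>\<alpha> \<theta>\<rho> \<beta> gmin
                   (x k) (\<alpha> k) (\<rho> k) (x (Suc k)) (\<alpha> (Suc k)) (\<rho> (Suc k))"
    and Z: "\<And>r y. Z r y = (if y \<in> F then ereal (\<Phi> r y) else \<infinity>)"
    and "x 0 \<in> F" and F: "F \<subseteq> {y \<in> K. \<forall>l\<in>L. g l y < 0}"
    and K: "compact K" and f: "continuous_on K f" and L: "finite L" "L \<noteq> {}"
    and g: "\<And>l. l \<in> L \<Longrightarrow> continuous_on K (g l)"
    and P: "\<And>r y. 0 \<le> P r y"
    and "forcing \<xi>" and "0 < \<alpha> 0" and "0 < \<rho> 0"
    and "0 < \<theta>\<alpha>" "\<theta>\<alpha> < 1" and "0 < \<theta>\<rho>" "\<theta>\<rho> < 1" and "1 \<le> \<phi>" and "1 < \<beta>"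
  shows "penalty_barrier_run (\<lambda>r k. \<Phi> r (x k)) (\<lambda>k. gmin (x k)) \<alpha> \<rho> \<xi> \<phi> \<theta>\<alpha> \<theta>\<rho> \<beta>"
proof -
  have feasible: "x k \<in> F" for k
  proof (induction k)
    case (Suc k)
    then show ?case
      using logds_iter_feasible_step[OF run Z] by blast
  qed (rule \<open>x 0 \<in> F\<close>)
  then have feasible_K: "x k \<in> K" and feasible_L: "\<forall>l\<in>L. g l (x k) < 0" for k
    using F by auto
  show ?thesis
  proof
    show "(\<rho> (Suc k) = \<rho> k \<and> \<alpha> (Suc k) = \<phi> * \<alpha> k \<and> \<Phi> (\<rho> k) (x (Suc k)) \<le> \<Phi> (\<rho> k) (x k) - \<xi> (\<alpha> k))
      \<or> ((\<forall>r. \<Phi> r (x (Suc k)) = \<Phi> r (x k)) \<and> \<alpha> (Suc k) = \<theta>\<alpha> * \<alpha> k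
         \<and> \<rho> (Suc k) = (if \<alpha> (Suc k) \<le> min (\<rho> k powr \<beta>) ((gmin (x k))\<^sup>2) then \<theta>\<rho> * \<rho> k else \<rho> k))" for k
      using logds_iter_feasible_step[OF run Z feasible, of k] by auto
    show "\<exists>B. \<forall>k. B \<le> \<Phi> r (x k)" if r: "0 < r" for r
    proof -
      obtain B where "\<And>y. y \<in> K \<Longrightarrow> \<forall>l\<in>L. g l y < 0 \<Longrightarrow> B \<le> log_barrier f g L r y"
        using log_barrier_bounded_below[where g = g, OF K f L(1) g less_imp_le[OF r]] by blast
      then have "B \<le> log_barrier f g L r (x k)" for k
        using feasible_K feasible_L by blast
      then show ?thesis
        using P unfolding \<Phi>_def by (meson add_increasing2)
    qed
    show "\<exists>\<delta>>0. \<forall>k. \<Phi> r (x k) \<le> M \<longrightarrow> \<delta> \<le> gmin (x k)" if r: "0 < r" for r M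
    proof -
      obtain \<delta> where "0 < \<delta>" and "\<And>y. y \<in> K \<Longrightarrow> \<forall>l\<in>L. g l y < 0 \<Longrightarrow> log_barrier f g L r y \<le> M
          \<Longrightarrow> \<delta> \<le> gmin y"
        using log_barrier_level_sets_separated[where g = g, OF K f L g r] unfolding gmin_def by blast
      moreover have "log_barrier f g L r (x k) \<le> M" if "\<Phi> r (x k) \<le> M" for k
        using that P[of r "x k"] unfolding \<Phi>_def by linarith
      ultimately show ?thesis
        using feasible_K feasible_L by blast
    qed
  qed (use assms in auto)
qed

theorem theorem2p7:
  fixes f :: "real^'n \<Rightarrow> real"
    and m p q :: nat
    and g h :: "nat \<Rightarrow> real^'n \<Rightarrow> real"
    and a :: "nat \<Rightarrow> real^'n" and b :: "nat \<Rightarrow> real"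
    and U :: "(real^'n) set"
    and D :: "(real^'n) set set"
    and \<xi> :: "real \<Rightarrow> real"
    and x0 :: "real^'n"
    and \<alpha>0 \<rho>0 \<nu> \<theta>\<alpha> \<theta>\<rho> \<phi> \<beta> :: real
    and x :: "nat \<Rightarrow> real^'n" and \<alpha> \<rho> :: "nat \<Rightarrow> real"
  assumes U_open: "open U" and X_sub_U: "polyX q a b \<subseteq> U"
    and f_C1: "C1_on U f"
    and g_C1: "\<forall>l\<in>{1..m}. C1_on U (g l)"
    and h_C1: "\<forall>j\<in>{1..p}. C1_on U (h j)"
    and D_def: "\<forall>S\<in>D. finite S \<and> (\<forall>d\<in>S. norm d = 1)"
    and \<alpha>0_pos: "\<alpha>0 > 0" and \<rho>0_pos: "\<rho>0 > 0"
    and \<nu>_range: "1 < \<nu>" "\<nu> \<le> 2"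
    and \<theta>\<alpha>_range: "0 < \<theta>\<alpha>" "\<theta>\<alpha> < 1"
    and \<theta>\<rho>_range: "0 < \<theta>\<rho>" "\<theta>\<rho> < 1"
    and \<phi>_ge: "\<phi> \<ge> 1" and \<beta>_gt: "\<beta> > 1"
    and \<xi>_forcing: "forcing \<xi>"
    and Glog_ne: "Glog m g x0 \<noteq> {}"
    and compact: "compact (polyX q a b \<inter> Omega_log m g x0)"
    and x0_X: "x0 \<in> polyX q a b"
    and x0_strict: "\<forall>l\<in>Glog m g x0. g l x0 < 0"
    and init: "x 0 = x0" "\<alpha> 0 = \<alpha>0" "\<rho> 0 = \<rho>0"
    and run: "\<forall>k. logds_iter (\<lambda>r y. Zmerit f m g p h (polyX q a b) x0 \<nu> r y) (polyX q a b) D \<xi>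
                 \<phi> \<theta>\<alpha> \<theta>\<rho> \<beta> (\<lambda>y. Min ((\<lambda>l. \<bar>g l y\<bar>) ` Glog m g x0))
                 (x k) (\<alpha> k) (\<rho> k) (x (Suc k)) (\<alpha> (Suc k)) (\<rho> (Suc k))"
  shows "infinite {k. \<rho> (Suc k) < \<rho> k}
    \<and> \<rho> \<longlonglongrightarrow> 0
    \<and> (\<forall>\<epsilon>>0. \<exists>N. \<forall>k\<in>{k. \<rho> (Suc k) < \<rho> k}. k \<ge> N \<longrightarrow> \<bar>\<alpha> k\<bar> < \<epsilon>)"
proof -
  let ?X = "polyX q a b" and ?L = "Glog m g x0"
  define F where "F = {y \<in> ?X. \<forall>l\<in>?L. g l y < 0}"
  define K where "K = ?X \<inter> Omega_log m g x0"
  have "finite ?L" and "?L \<subseteq> {1..m}"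
    unfolding Glog_def by auto
  have "K \<subseteq> U"
    using X_sub_U unfolding K_def by blast
  interpret penalty_barrier_run
      "\<lambda>r k. log_barrier f g ?L r (x k) + penalty m g p h x0 \<nu> r (x k)"
      "\<lambda>k. Min ((\<lambda>l. \<bar>g l (x k)\<bar>) ` ?L)" \<alpha> \<rho> \<xi> \<phi> \<theta>\<alpha> \<theta>\<rho> \<beta>
  proof (rule logds_run_penalty_barrier_run[where P = "penalty m g p h x0 \<nu>" and x = x and \<alpha> = \<alpha> and \<rho> = \<rho>,
        OF run[rule_format]])
    show "Zmerit f m g p h ?X x0 \<nu> r y =
        (if y \<in> F then ereal (log_barrier f g ?L r y + penalty m g p h x0 \<nu> r y) else \<infinity>)" for r y
      unfolding Zmerit_eq F_def by simp
    show "F \<subseteq> {y \<in> K. \<forall>l\<in>?L. g l y < 0}"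
      unfolding F_def K_def Omega_log_def by (auto intro: less_imp_le)
    show "continuous_on K f"
      using C1_on_continuous_on \<open>K \<subseteq> U\<close> f_C1 by blast
    show "continuous_on K (g l)" if "l \<in> ?L" for l
      using C1_on_continuous_on \<open>K \<subseteq> U\<close> g_C1 \<open>?L \<subseteq> {1..m}\<close> that by blast
    show "0 \<le> penalty m g p h x0 \<nu> r y" for r y
      by (rule penalty_nonneg)
    show "x 0 \<in> F"
      unfolding F_def using init x0_X x0_strict by simp
  qed (use \<open>finite ?L\<close> assms in \<open>simp_all add: K_def\<close>)
  show ?thesis
    using infinite_rho_decreases rho_tendsto_zero alpha_tendsto_zero_on_rho_decreases by blast
qed

end
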